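(* Let $X\ge 0$ be a gamble and let $\underline{P}$ be a 2-coherent lower prevision (defined on a domain containing the gambles involved) with conjugate upper prevision $\overline{P}$. Then $[\underline{P}(X)]^2\le\underline{P}(X^2)$ and $[\overline{P}(X)]^2\le\overline{P}(X^2)$.
   Context: $\Pi$ is a partition of the sure event into pairwise disjoint non-impossible events; a gamble is a bounded map $X:\Pi\to\mathbb{R}$. A lower prevision $\underline{P}:\mathcal{D}\to\mathbb{R}$ is 2-coherent iff for all $X_0,X_1\in\mathcal{D}$, $s_1\ge 0$, $s_0\in\mathbb{R}$, $\sup[s_1(X_1-\underline{P}(X_1))-s_0(X_0-\underline{P}(X_0))]\ge 0$; its conjugate is $\overline{P}(Y)=-\underline{P}(-Y)$. *)

theory Defs
  imports Complex_Main
begin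

text \<open>The partition \<Pi> is modelled by the type 'w (elements = atoms of the partition).
  A gamble is a bounded real map on \<Pi>.\<close>

definition gamble :: "('w \<Rightarrow> real) \<Rightarrow> bool" where
  "gamble X \<longleftrightarrow> bdd_above (range X) \<and> bdd_below (range X)"

definition coherent2 :: "('w \<Rightarrow> real) set \<Rightarrow> (('w \<Rightarrow> real) \<Rightarrow> real) \<Rightarrow> bool" where
  "coherent2 D P \<longleftrightarrow>
     (\<forall>X0\<in>D. \<forall>X1\<in>D. \<forall>s1 s0::real. s1 \<ge> 0 \<longrightarrow>
        (SUP w. s1 * (X1 w - P X1) - s0 * (X0 w - P X0)) \<ge> 0)"

definition upper :: "(('w \<Rightarrow> real) \<Rightarrow> real) \<Rightarrow> ('w \<Rightarrow> real) \<Rightarrow> real" where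
  "upper P Y = - P (\<lambda>w. - Y w)"

end

theory Submission
  imports Defs
begin

text \<open>Both inequalities come from a single 2-coherence test: with \<open>a\<close> the (lower or upper)
  prevision of \<open>X\<close>, the gain \<open>2a(X - a) - (X\<^sup>2 - P(X\<^sup>2))\<close> equals \<open>P(X\<^sup>2) - a\<^sup>2 - (X - a)\<^sup>2\<close>, so its
  supremum is at most \<open>P(X\<^sup>2) - a\<^sup>2\<close>, while 2-coherence makes it nonnegative. In the lower case the
  stake \<open>2a\<close> on \<open>X\<close> must be nonnegative, which is where \<open>X \<ge> 0\<close> enters; in the upper case
  the test is run on \<open>-X\<close> and \<open>-X\<^sup>2\<close> with \<open>-X\<close> in the slot whose stake may have any sign.\<close>

lemma coherent2_nonneg_if_gain_le:
  assumes "coherent2 D P" and "Y \<in> D" and "Z \<in> D" and "s \<ge> 0"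
    and gain_le: "\<And>w. s * (Z w - P Z) - t * (Y w - P Y) \<le> M"
  shows "0 \<le> M"
proof -
  have "0 \<le> (SUP w. s * (Z w - P Z) - t * (Y w - P Y))"
    using assms(1-4) unfolding coherent2_def by blast
  also have "\<dots> \<le> M"
    using gain_le by (rule cSUP_least[OF UNIV_not_empty])
  finally show ?thesis .
qed

lemma coherent2_lower_bound:
  assumes "coherent2 D P" and "X \<in> D" and "\<And>w. c \<le> X w"
  shows "c \<le> P X"
proof -
  have "0 \<le> P X - c"
    by (rule coherent2_nonneg_if_gain_le[where s = 0 and t = 1, OF assms(1,2,2)])
       (use assms(3) in auto)
  then show ?thesis by simp
qed

lemma coherent2_square_le:
  assumes "coherent2 D P" and "X \<in> D" and "(\<lambda>w. (X w)\<^sup>2) \<in> D" and "0 \<le> P X"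
  shows "(P X)\<^sup>2 \<le> P (\<lambda>w. (X w)\<^sup>2)"
proof -
  let ?a = "P X" and ?q = "P (\<lambda>w. (X w)\<^sup>2)"
  have "0 \<le> ?q - ?a\<^sup>2"
  proof (rule coherent2_nonneg_if_gain_le[where s = "2 * ?a" and t = 1, OF assms(1,3,2)])
    show "0 \<le> 2 * ?a" using assms(4) by simp
    fix w
    have "0 \<le> (X w - ?a)\<^sup>2" by simp
    then show "2 * ?a * (X w - ?a) - 1 * ((X w)\<^sup>2 - ?q) \<le> ?q - ?a\<^sup>2"
      by (simp add: power2_eq_square algebra_simps)
  qed
  then show ?thesis by simp
qed

lemma coherent2_upper_square_le:
  assumes "coherent2 D P" and "(\<lambda>w. - X w) \<in> D" and "(\<lambda>w. - ((X w)\<^sup>2)) \<in> D"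
  shows "(upper P X)\<^sup>2 \<le> upper P (\<lambda>w. (X w)\<^sup>2)"
proof -
  let ?b = "upper P X" and ?c = "upper P (\<lambda>w. (X w)\<^sup>2)"
  have "0 \<le> ?c - ?b\<^sup>2"
  proof (rule coherent2_nonneg_if_gain_le[where s = 1 and t = "2 * ?b", OF assms(1,2,3)])
    fix w
    have "0 \<le> (X w - ?b)\<^sup>2" by simp
    then show "1 * (- ((X w)\<^sup>2) - P (\<lambda>w. - ((X w)\<^sup>2))) - 2 * ?b * (- X w - P (\<lambda>w. - X w))
        \<le> ?c - ?b\<^sup>2"
      by (simp add: upper_def power2_eq_square algebra_simps)
  qed simp
  then show ?thesis by simp
qed

theorem corollary3:
  fixes X :: "'w \<Rightarrow> real" and D :: "('w \<Rightarrow> real) set" and P :: "('w \<Rightarrow> real) \<Rightarrow> real"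
  assumes "gamble X" and "\<forall>w. X w \<ge> 0"
    and "\<forall>Y\<in>D. gamble Y"
    and "coherent2 D P"
  shows "(X \<in> D \<and> (\<lambda>w. (X w)\<^sup>2) \<in> D \<longrightarrow> (P X)\<^sup>2 \<le> P (\<lambda>w. (X w)\<^sup>2))
       \<and> ((\<lambda>w. - X w) \<in> D \<and> (\<lambda>w. - ((X w)\<^sup>2)) \<in> D \<longrightarrow>
            (upper P X)\<^sup>2 \<le> upper P (\<lambda>w. (X w)\<^sup>2))"
proof (intro conjI impI)
  assume dom: "X \<in> D \<and> (\<lambda>w. (X w)\<^sup>2) \<in> D"
  then have "0 \<le> P X"
    using coherent2_lower_bound[OF assms(4)] assms(2) by blast
  with dom show "(P X)\<^sup>2 \<le> P (\<lambda>w. (X w)\<^sup>2)"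
    using coherent2_square_le[OF assms(4)] by blast
next
  assume "(\<lambda>w. - X w) \<in> D \<and> (\<lambda>w. - ((X w)\<^sup>2)) \<in> D"
  then show "(upper P X)\<^sup>2 \<le> upper P (\<lambda>w. (X w)\<^sup>2)"
    using coherent2_upper_square_le[OF assms(4)] by blast
qed

end
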